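(* Let $t\ge 1$ be an integer and $n \geq 2t+110$. Then $D_t > n^{n-2t-17}$, where \[ D_t:= \min_{\substack{F \text{ forest}\\|F|=t}} \ \min_{\substack{T_0 \in \mathcal{T}_n \setminus \mathcal{S}_n \\ |T_0 \cap F| < t}} \ |\mathcal{T}_n[T_0;F]|. \]
   Context: $\mathcal{T}_n$ is the set of labelled spanning trees of $K_n$ (vertex set $[n]$), each identified with its edge set in $\binom{[n]}{2}$; forests are likewise identified with their edge sets and $|F|$ is the number of edges. $\mathcal{S}_n\subset\mathcal{T}_n$ is the set of stars (spanning trees with a vertex of degree $n-1$). For a forest $F$ and $T_0\in\mathcal{T}_n$, $\mathcal{T}_n[T_0;F]:=\{T\in\mathcal{T}_n : F\subseteq T,\ (T\cap T_0)\setminus F=\emptyset\}$, the trees containing $F$ that share no edge with $T_0$ outside $F$. The minimum in $D_t$ ranges over all forests $F$ of $K_n$ with $t$ edges and all non-star spanning trees $T_0$ with $|T_0\cap F|<t$. *)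

theory Defs
  imports Main
begin

definition Kn_edges :: "nat \<Rightarrow> nat set set" where
  "Kn_edges n = {e. e \<subseteq> {1..n} \<and> card e = 2}"

inductive reach :: "nat set set \<Rightarrow> nat \<Rightarrow> nat \<Rightarrow> bool" for E where
  refl: "reach E u u"
| step: "reach E u v \<Longrightarrow> {v, w} \<in> E \<Longrightarrow> reach E u w"

definition connected_on :: "nat \<Rightarrow> nat set set \<Rightarrow> bool" where
  "connected_on n E \<longleftrightarrow> (\<forall>u\<in>{1..n}. \<forall>v\<in>{1..n}. reach E u v)"

definition has_cycle :: "nat set set \<Rightarrow> bool" where
  "has_cycle E \<longleftrightarrow> (\<exists>vs. length vs \<ge> 3 \<and> distinct vs \<and>
      (\<forall>i. Suc i < length vs \<longrightarrow> {vs ! i, vs ! Suc i} \<in> E) \<and>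
      {last vs, hd vs} \<in> E)"

definition is_forest :: "nat \<Rightarrow> nat set set \<Rightarrow> bool" where
  "is_forest n F \<longleftrightarrow> F \<subseteq> Kn_edges n \<and> \<not> has_cycle F"

definition spanning_trees :: "nat \<Rightarrow> nat set set set" where
  "spanning_trees n = {T. T \<subseteq> Kn_edges n \<and> connected_on n T \<and> \<not> has_cycle T}"

definition stars :: "nat \<Rightarrow> nat set set set" where
  "stars n = {T \<in> spanning_trees n. \<exists>v\<in>{1..n}. card {e \<in> T. v \<in> e} = n - 1}"

definition trees_avoiding :: "nat \<Rightarrow> nat set set \<Rightarrow> nat set set \<Rightarrow> nat set set set" where
  "trees_avoiding n T0 F = {T \<in> spanning_trees n. F \<subseteq> T \<and> (T \<inter> T0) - F = {}}"

definition D :: "nat \<Rightarrow> nat \<Rightarrow> nat" where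
  "D n t = Min {card (trees_avoiding n T0 F) | F T0.
      is_forest n F \<and> card F = t \<and> T0 \<in> spanning_trees n - stars n \<and> card (T0 \<inter> F) < t}"

end

theory Submission
  imports Defs
begin

(* Grow F by attachment moves: join the root (least vertex) r of a component of the current
   forest to a vertex v of another component by an edge {v, r} outside T0. While k roots remain
   there are at least (k - 3) n moves, since every vertex lies in the component of exactly one
   root and T0 forbids at most 2(n - 1) pairs. Double counting then gives at least n^m sets of
   m = n - t - 3 moves. Each resulting forest extends to a tree of T_n[T0; F], because the
   complement of a non-star tree is connected; and a tree arises from at most n^5 move sets,
   since a move set is determined by its edge set (an m-subset of the at most m + 2 edges of
   T - F) and its 3 remaining roots. Hence |T_n[T0; F]| >= n^(n - t - 8). *)

section \<open>Walks and cycles\<close>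

lemma reach_trans: "reach E u v \<Longrightarrow> reach E v w \<Longrightarrow> reach E u w"
  by (rotate_tac, induction rule: reach.induct) (auto intro: reach.step)

lemma reach_edge: "{u, v} \<in> E \<Longrightarrow> reach E u v"
  using reach.step[OF reach.refl] .

lemma reach_sym: "reach E u v \<Longrightarrow> reach E v u"
proof (induction rule: reach.induct)
  case (step u v w)
  then show ?case by (metis reach_edge reach_trans insert_commute)
qed (rule reach.refl)

lemma reach_mono: "reach E u v \<Longrightarrow> E \<subseteq> E' \<Longrightarrow> reach E' u v"
  by (induction rule: reach.induct) (auto intro: reach.intros)

lemma reach_isolated: "reach E u w \<Longrightarrow> \<forall>e\<in>E. w \<notin> e \<Longrightarrow> u = w"
  by (erule reach.cases) auto

lemma reach_insert_iff:
  "reach (insert {a, b} E) x y \<longleftrightarrow>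
     reach E x y \<or> (reach E x a \<and> reach E b y) \<or> (reach E x b \<and> reach E a y)"
proof
  assume "reach (insert {a, b} E) x y"
  then show "reach E x y \<or> (reach E x a \<and> reach E b y) \<or> (reach E x b \<and> reach E a y)"
  proof (induction rule: reach.induct)
    case (step u v w)
    show ?case
    proof (cases "{v, w} = {a, b}")
      case True
      then have "(v = a \<and> w = b) \<or> (v = b \<and> w = a)" by (auto simp: doubleton_eq_iff)
      then show ?thesis using step.IH by (auto intro: reach.refl)
    next
      case False
      then have "reach E v w" using step.hyps(2) by (auto intro: reach_edge)
      then show ?thesis using step.IH by (meson reach_trans)
    qed
  qed (simp add: reach.refl)
next
  have "reach (insert {a, b} E) a b" "reach (insert {a, b} E) b a"
    by (auto intro: reach_edge simp: insert_commute)
  moreover have "reach (insert {a, b} E) u v" if "reach E u v" for u v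
    using that by (rule reach_mono) auto
  moreover assume "reach E x y \<or> (reach E x a \<and> reach E b y) \<or> (reach E x b \<and> reach E a y)"
  ultimately show "reach (insert {a, b} E) x y" by (meson reach_trans)
qed

lemma reach_Diff_edge:
  assumes "reach E x y" "\<not> reach E x a"
  shows "reach (E - {{a, b}}) x y"
  using assms
proof (induction rule: reach.induct)
  case (step u v w)
  have "{v, w} \<noteq> {a, b}"
  proof
    assume "{v, w} = {a, b}"
    then have "v = a \<or> w = a" by (auto simp: doubleton_eq_iff)
    then show False using step reach.step by blast
  qed
  with step show ?case by (auto intro: reach.step)
qed (rule reach.refl)

lemma reach_crossing_edge:
  assumes "reach G u v" "\<not> reach E u v"
  obtains x y where "{x, y} \<in> G" "reach E u x" "\<not> reach E u y"
  using assms by (induction rule: reach.induct) (auto intro: reach.refl)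

lemma Kn_edgesI: "a \<in> {1..n} \<Longrightarrow> b \<in> {1..n} \<Longrightarrow> a \<noteq> b \<Longrightarrow> {a, b} \<in> Kn_edges n"
  unfolding Kn_edges_def by auto

lemma Kn_edgesE:
  assumes "e \<in> Kn_edges n"
  obtains a b where "a \<noteq> b" "e = {a, b}" "a \<in> {1..n}" "b \<in> {1..n}"
  using assms unfolding Kn_edges_def by (auto simp: card_2_iff)

lemma finite_Kn_edges: "finite (Kn_edges n)"
  by (rule finite_subset[of _ "Pow {1..n}"]) (auto simp: Kn_edges_def)

lemma finite_subset_Kn_edges: "E \<subseteq> Kn_edges n \<Longrightarrow> finite E"
  using finite_Kn_edges finite_subset by blast

lemma reach_in_vertices: "reach E u v \<Longrightarrow> E \<subseteq> Kn_edges n \<Longrightarrow> u \<noteq> v \<Longrightarrow> v \<in> {1..n}"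
proof (induction rule: reach.induct)
  case (step u v w)
  then have "{v, w} \<subseteq> {1..n}" by (auto simp: Kn_edges_def)
  then show ?case by auto
qed simp

lemma connected_on_mono: "connected_on n E \<Longrightarrow> E \<subseteq> E' \<Longrightarrow> connected_on n E'"
  unfolding connected_on_def using reach_mono by blast

lemma has_cycle_iff_cyclic:
  "has_cycle E \<longleftrightarrow> (\<exists>vs. 3 \<le> length vs \<and> distinct vs \<and>
      (\<forall>j<length vs. {vs ! j, vs ! (Suc j mod length vs)} \<in> E))"
proof
  assume "has_cycle E"
  then obtain vs where vs: "3 \<le> length vs" "distinct vs"
    "\<forall>i. Suc i < length vs \<longrightarrow> {vs ! i, vs ! Suc i} \<in> E" "{last vs, hd vs} \<in> E"
    unfolding has_cycle_def by blast
  have "{vs ! j, vs ! (Suc j mod length vs)} \<in> E" if "j < length vs" for j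
  proof (cases "Suc j < length vs")
    case False
    then have j: "Suc j = length vs" using that by simp
    have "vs \<noteq> []" using vs(1) by auto
    then have "vs ! j = last vs" "vs ! (Suc j mod length vs) = hd vs"
      using j by (simp_all add: last_conv_nth hd_conv_nth flip: j)
    then show ?thesis using vs(4) by simp
  qed (use vs(3) in simp)
  then show "\<exists>vs. 3 \<le> length vs \<and> distinct vs \<and>
      (\<forall>j<length vs. {vs ! j, vs ! (Suc j mod length vs)} \<in> E)" using vs by blast
next
  assume "\<exists>vs. 3 \<le> length vs \<and> distinct vs \<and>
      (\<forall>j<length vs. {vs ! j, vs ! (Suc j mod length vs)} \<in> E)"
  then obtain vs where vs: "3 \<le> length vs" "distinct vs"
      "\<forall>j<length vs. {vs ! j, vs ! (Suc j mod length vs)} \<in> E" by blast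
  have "\<forall>i. Suc i < length vs \<longrightarrow> {vs ! i, vs ! Suc i} \<in> E"
    using vs(3) by (metis Suc_lessD mod_less)
  moreover have "{last vs, hd vs} \<in> E"
  proof -
    obtain k where k: "length vs = Suc k" using vs(1) by (cases "length vs") auto
    then have "vs \<noteq> []" by auto
    then show ?thesis using vs(3)[rule_format, of k] k by (simp add: last_conv_nth hd_conv_nth)
  qed
  ultimately show "has_cycle E" unfolding has_cycle_def using vs by blast
qed

lemma has_cycle_mono: "has_cycle E \<Longrightarrow> E \<subseteq> E' \<Longrightarrow> has_cycle E'"
  unfolding has_cycle_def by blast

lemma cyclic_edge_eq_imp_eq:
  assumes "distinct vs" "3 \<le> length vs" "i < length vs" "j < length vs"
    and "{vs ! i, vs ! (Suc i mod length vs)} = {vs ! j, vs ! (Suc j mod length vs)}"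
  shows "i = j"
proof -
  let ?L = "length vs"
  have idx: "vs ! p = vs ! q \<longleftrightarrow> p = q" if "p < ?L" "q < ?L" for p q
    using assms(1) that by (simp add: nth_eq_iff_index_eq)
  have mod: "Suc k mod ?L < ?L" for k using assms(2) by (auto intro: mod_less_divisor)
  from assms(5) consider "vs ! i = vs ! j"
    | "vs ! i = vs ! (Suc j mod ?L)" "vs ! (Suc i mod ?L) = vs ! j"
    by (auto simp: doubleton_eq_iff)
  then show ?thesis
  proof cases
    case 2
    then have "i = Suc j mod ?L" "Suc i mod ?L = j" using idx mod assms(3,4) by auto
    then have "Suc (Suc j) mod ?L = j" by (simp add: mod_Suc_eq)
    then show ?thesis using assms(2,4) by (auto simp: mod_if split: if_splits)
  qed (use idx assms(3,4) in simp)
qed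

lemma reach_around_cycle:
  assumes "j < L" and edges: "\<And>i. i < L \<Longrightarrow> i \<noteq> j \<Longrightarrow> {vs ! i, vs ! (Suc i mod L)} \<in> E"
  shows "reach E (vs ! (Suc j mod L)) (vs ! j)"
proof -
  have "reach E (vs ! (Suc j mod L)) (vs ! ((Suc j + k) mod L))" if "k < L" for k
    using that
  proof (induction k)
    case (Suc k)
    have "(Suc j + k) mod L \<noteq> j" using Suc.prems assms(1) by (auto simp: mod_if)
    then have "{vs ! ((Suc j + k) mod L), vs ! ((Suc j + Suc k) mod L)} \<in> E"
      using edges[of "(Suc j + k) mod L"] assms(1) by (simp add: mod_Suc_eq)
    with Suc show ?case by (auto intro: reach.step)
  qed (simp add: reach.refl)
  from this[of "L - 1"] show ?thesis using assms(1) by simp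
qed

lemma not_has_cycle_insert:
  assumes "\<not> has_cycle E" "\<not> reach E a b"
  shows "\<not> has_cycle (insert {a, b} E)"
proof
  assume "has_cycle (insert {a, b} E)"
  then obtain vs where vs: "3 \<le> length vs" "distinct vs"
      "\<forall>j<length vs. {vs ! j, vs ! (Suc j mod length vs)} \<in> insert {a, b} E"
    unfolding has_cycle_iff_cyclic by blast
  let ?L = "length vs"
  obtain j where j: "j < ?L" "{vs ! j, vs ! (Suc j mod ?L)} = {a, b}"
    using vs assms(1) unfolding has_cycle_iff_cyclic by blast
  have "{vs ! i, vs ! (Suc i mod ?L)} \<in> E" if "i < ?L" "i \<noteq> j" for i
    using vs(3) j cyclic_edge_eq_imp_eq[OF vs(2,1) that(1) j(1)] that by auto
  with j(1) have "reach E (vs ! (Suc j mod ?L)) (vs ! j)" by (rule reach_around_cycle)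
  then show False using j(2) assms(2) reach_sym by (auto simp: doubleton_eq_iff)
qed

lemma reach_imp_simple_path:
  assumes "reach E a b"
  obtains vs where "vs \<noteq> []" "hd vs = a" "last vs = b" "distinct vs"
    "\<forall>i. Suc i < length vs \<longrightarrow> {vs ! i, vs ! Suc i} \<in> E"
proof -
  have "\<exists>vs. vs \<noteq> [] \<and> hd vs = a \<and> last vs = b \<and> distinct vs \<and>
          (\<forall>i. Suc i < length vs \<longrightarrow> {vs ! i, vs ! Suc i} \<in> E)"
    using assms
  proof (induction rule: reach.induct)
    case (refl u)
    show ?case by (rule exI[of _ "[u]"]) simp
  next
    case (step u v w)
    then obtain vs where vs: "vs \<noteq> []" "hd vs = u" "last vs = v" "distinct vs"
        "\<forall>i. Suc i < length vs \<longrightarrow> {vs ! i, vs ! Suc i} \<in> E" by blast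
    show ?case
    proof (cases "w \<in> set vs")
      case True
      then obtain i where i: "i < length vs" "vs ! i = w" by (meson in_set_conv_nth)
      define us where "us = take (Suc i) vs"
      have "us \<noteq> []" "hd us = u" "distinct us" using vs i unfolding us_def by auto
      moreover have "last us = w" using i unfolding us_def by (simp add: take_Suc_conv_app_nth)
      moreover have "\<forall>k. Suc k < length us \<longrightarrow> {us ! k, us ! Suc k} \<in> E"
        using vs(5) unfolding us_def by simp
      ultimately show ?thesis by blast
    next
      case False
      have "{(vs @ [w]) ! i, (vs @ [w]) ! Suc i} \<in> E" if "Suc i < length (vs @ [w])" for i
      proof (cases "Suc i < length vs")
        case False
        then have "i = length vs - 1" using that by simp
        then show ?thesis using vs(1,3) step.hyps(2) by (simp add: nth_append last_conv_nth)
      qed (use vs(5) in \<open>simp add: nth_append\<close>)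
      with vs False show ?thesis by (intro exI[of _ "vs @ [w]"]) auto
    qed
  qed
  with that show ?thesis by blast
qed

lemma has_cycle_insert_reach:
  assumes "reach E a b" "a \<noteq> b" "{a, b} \<notin> E"
  shows "has_cycle (insert {a, b} E)"
proof -
  obtain vs where vs: "vs \<noteq> []" "hd vs = a" "last vs = b" "distinct vs"
      "\<forall>i. Suc i < length vs \<longrightarrow> {vs ! i, vs ! Suc i} \<in> E"
    using reach_imp_simple_path[OF assms(1)] by blast
  have "length vs \<noteq> 1" using vs assms(2)
    by (metis One_nat_def last_conv_nth hd_conv_nth diff_Suc_1)
  moreover have "length vs \<noteq> 2"
  proof
    assume "length vs = 2"
    then have "{vs ! 0, vs ! 1} \<in> E" "vs ! 0 = a" "vs ! 1 = b"
      using vs by (auto simp: hd_conv_nth last_conv_nth)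
    then show False using assms(3) by simp
  qed
  moreover have "length vs \<noteq> 0" using vs(1) by simp
  ultimately have "3 \<le> length vs" by linarith
  then show ?thesis unfolding has_cycle_def using vs
    by (intro exI[of _ vs]) (auto simp: insert_commute)
qed

lemma has_cycle_4:
  assumes "distinct [u, v, x, y]" "{u, v} \<in> E" "{v, x} \<in> E" "{x, y} \<in> E" "{y, u} \<in> E"
  shows "has_cycle E"
  unfolding has_cycle_def
proof (intro exI[of _ "[u, v, x, y]"] conjI allI impI)
  fix i assume "Suc i < length [u, v, x, y]"
  then have "i = 0 \<or> i = 1 \<or> i = 2" by auto
  then show "{[u, v, x, y] ! i, [u, v, x, y] ! Suc i} \<in> E" using assms by auto
qed (use assms in auto)

section \<open>Components and spanning trees\<close>

definition comp_rep :: "nat set set \<Rightarrow> nat \<Rightarrow> nat" where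
  "comp_rep E x = (LEAST u. reach E x u)"

definition comp_reps :: "nat \<Rightarrow> nat set set \<Rightarrow> nat set" where
  "comp_reps n E = {v \<in> {1..n}. \<forall>u. reach E v u \<longrightarrow> v \<le> u}"

lemma reach_comp_rep: "reach E x (comp_rep E x)"
  unfolding comp_rep_def by (rule LeastI[of _ x]) (rule reach.refl)

lemma comp_rep_le: "reach E x u \<Longrightarrow> comp_rep E x \<le> u"
  unfolding comp_rep_def by (rule Least_le)

lemma comp_rep_eq: "reach E x y \<Longrightarrow> comp_rep E x = comp_rep E y"
  using comp_rep_le reach_trans[OF reach_sym reach_comp_rep] reach_trans[OF _ reach_comp_rep]
  by (metis antisym)

lemma comp_rep_in_comp_reps:
  assumes "E \<subseteq> Kn_edges n" "x \<in> {1..n}"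
  shows "comp_rep E x \<in> comp_reps n E"
proof -
  have "comp_rep E x \<in> {1..n}"
    using reach_in_vertices[OF reach_comp_rep assms(1)] assms(2) by (cases "x = comp_rep E x") auto
  then show ?thesis
    unfolding comp_reps_def using comp_rep_le reach_trans reach_comp_rep by blast
qed

lemma comp_rep_of_comp_reps: "v \<in> comp_reps n E \<Longrightarrow> comp_rep E v = v"
  unfolding comp_reps_def by (simp add: antisym comp_rep_le reach.refl reach_comp_rep)

lemma comp_reps_subset: "comp_reps n E \<subseteq> {1..n}"
  unfolding comp_reps_def by auto

lemma finite_comp_reps: "finite (comp_reps n E)"
  using comp_reps_subset finite_subset by blast

lemma comp_reps_reach_eq:
  "\<rho>1 \<in> comp_reps n E \<Longrightarrow> \<rho>2 \<in> comp_reps n E \<Longrightarrow> reach E \<rho>1 \<rho>2 \<Longrightarrow> \<rho>1 = \<rho>2"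
  unfolding comp_reps_def using reach_sym[of E \<rho>1 \<rho>2] by (simp add: antisym)

lemma comp_reps_empty: "comp_reps n {} = {1..n}"
  unfolding comp_reps_def using reach_isolated by fastforce

lemma comp_reps_antimono: "E \<subseteq> E' \<Longrightarrow> comp_reps n E' \<subseteq> comp_reps n E"
  unfolding comp_reps_def using reach_mono[of E] by blast

lemma comp_reps_insert_superset:
  "comp_reps n E - {max (comp_rep E a) (comp_rep E b)} \<subseteq> comp_reps n (insert {a, b} E)"
proof
  fix v assume v: "v \<in> comp_reps n E - {max (comp_rep E a) (comp_rep E b)}"
  have "v \<le> u" if "reach (insert {a, b} E) v u" for u
    using that unfolding reach_insert_iff
  proof (elim disjE conjE)
    assume "reach E v u" then show ?thesis using v unfolding comp_reps_def by blast
  next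
    assume "reach E v a" "reach E b u"
    then have "v = comp_rep E a" "comp_rep E b \<le> u"
      using comp_rep_eq[of E v a] comp_rep_of_comp_reps[of v n E] comp_rep_le[of E b u] v by auto
    then show ?thesis using v by (auto simp: max_def split: if_splits)
  next
    assume "reach E v b" "reach E a u"
    then have "v = comp_rep E b" "comp_rep E a \<le> u"
      using comp_rep_eq[of E v b] comp_rep_of_comp_reps[of v n E] comp_rep_le[of E a u] v by auto
    then show ?thesis using v by (auto simp: max_def split: if_splits)
  qed
  then show "v \<in> comp_reps n (insert {a, b} E)" using v unfolding comp_reps_def by blast
qed

lemma comp_reps_insert:
  assumes "E \<subseteq> Kn_edges n" "a \<in> {1..n}" "b \<in> {1..n}" "\<not> reach E a b"
  defines "m \<equiv> max (comp_rep E a) (comp_rep E b)"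
  shows "m \<in> comp_reps n E" "comp_reps n (insert {a, b} E) = comp_reps n E - {m}"
proof -
  let ?ca = "comp_rep E a" and ?cb = "comp_rep E b"
  show "m \<in> comp_reps n E"
    unfolding m_def using comp_rep_in_comp_reps[OF assms(1)] assms(2,3) by (simp add: max_def)
  have a: "reach E ?ca a" and b: "reach E b ?cb" by (rule reach_sym[OF reach_comp_rep] reach_comp_rep)+
  have "?ca \<noteq> ?cb"
  proof
    assume "?ca = ?cb"
    then have "reach E b a" using reach_trans[OF b] a by simp
    then show False using assms(4) reach_sym by blast
  qed
  moreover have "reach (insert {a, b} E) ?ca ?cb"
    using a b unfolding reach_insert_iff by blast
  then have "reach (insert {a, b} E) ?cb ?ca" by (rule reach_sym)
  ultimately have "reach (insert {a, b} E) m (min ?ca ?cb)" "min ?ca ?cb < m"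
    unfolding m_def using \<open>reach (insert {a, b} E) ?ca ?cb\<close> by (auto simp: max_def min_def)
  then have "m \<notin> comp_reps n (insert {a, b} E)"
    unfolding comp_reps_def by (auto dest!: spec[of _ "min ?ca ?cb"])
  then show "comp_reps n (insert {a, b} E) = comp_reps n E - {m}"
    using comp_reps_antimono[of E "insert {a, b} E" n] comp_reps_insert_superset[of n E a b]
    unfolding m_def by blast
qed

lemma card_comp_reps_acyclic:
  assumes "E \<subseteq> Kn_edges n" "\<not> has_cycle E"
  shows "card (comp_reps n E) + card E = n"
  using finite_subset_Kn_edges[OF assms(1)] assms
proof (induction E rule: finite_induct)
  case empty
  then show ?case by (simp add: comp_reps_empty)
next
  case (insert e E)
  obtain a b where ab: "a \<noteq> b" "e = {a, b}" "a \<in> {1..n}" "b \<in> {1..n}"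
    using insert.prems(1) by (auto elim: Kn_edgesE)
  have E: "E \<subseteq> Kn_edges n" "\<not> has_cycle E"
    using insert.prems has_cycle_mono[of E "insert e E"] by auto
  have "\<not> reach E a b"
    using has_cycle_insert_reach[of E a b] ab(1,2) insert.hyps(2) insert.prems(2) by blast
  from comp_reps_insert[OF E(1) ab(3,4) this]
  have "card (comp_reps n (insert e E)) + 1 = card (comp_reps n E)"
    using ab(2) finite_comp_reps by (metis card_Suc_Diff1 Suc_eq_plus1)
  then show ?case using insert.IH[OF E] insert.hyps by simp
qed

lemma card_acyclic_le:
  assumes "E \<subseteq> Kn_edges n" "\<not> has_cycle E"
  shows "card E \<le> n - 1"
proof -
  have "1 \<le> card (comp_reps n E)" if "1 \<le> n"
    using comp_rep_in_comp_reps[OF assms(1), of 1] that finite_comp_reps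
    by (auto simp: Suc_le_eq card_gt_0_iff)
  then show ?thesis using card_comp_reps_acyclic[OF assms] by (cases "1 \<le> n") auto
qed

lemma acyclic_extends_to_spanning_tree:
  assumes "E \<subseteq> G" "G \<subseteq> Kn_edges n" "\<not> has_cycle E" "connected_on n G"
  shows "\<exists>T \<in> spanning_trees n. E \<subseteq> T \<and> T \<subseteq> G"
  using assms
proof (induction "card (G - E)" arbitrary: E rule: less_induct)
  case less
  show ?case
  proof (cases "connected_on n E")
    case True
    then show ?thesis using less.prems unfolding spanning_trees_def by blast
  next
    case False
    then obtain u v where uv: "u \<in> {1..n}" "v \<in> {1..n}" "\<not> reach E u v"
      unfolding connected_on_def by blast
    have "reach G u v" using less.prems(4) uv unfolding connected_on_def by blast
    then obtain x y where xy: "{x, y} \<in> G" "reach E u x" "\<not> reach E u y"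
      using uv(3) by (rule reach_crossing_edge)
    then have nr: "\<not> reach E x y" using reach_trans[of E u x y] by blast
    then have "{x, y} \<notin> E" using reach_edge by blast
    then have "card (G - insert {x, y} E) < card (G - E)"
      using xy(1) finite_subset_Kn_edges[OF less.prems(2)] by (intro psubset_card_mono) auto
    then show ?thesis
      using less.hyps[of "insert {x, y} E"] less.prems xy(1) not_has_cycle_insert[OF _ nr] by auto
  qed
qed

lemma nonstar_has_non_neighbour:
  assumes "T \<in> spanning_trees n - stars n" "u \<in> {1..n}"
  obtains x where "x \<in> {1..n}" "x \<noteq> u" "{u, x} \<notin> T"
proof -
  have "\<exists>x\<in>{1..n}. x \<noteq> u \<and> {u, x} \<notin> T"
  proof (rule ccontr)
    assume "\<not> ?thesis"
    then have "{e \<in> T. u \<in> e} = (\<lambda>x. {u, x}) ` ({1..n} - {u})"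
    proof (intro equalityI subsetI)
      fix e assume "e \<in> {e \<in> T. u \<in> e}"
      then have "e \<in> Kn_edges n" "u \<in> e" using assms(1) unfolding spanning_trees_def by auto
      then show "e \<in> (\<lambda>x. {u, x}) ` ({1..n} - {u})" by (auto elim!: Kn_edgesE)
    qed auto
    moreover have "inj_on (\<lambda>x. {u, x}) ({1..n} - {u})"
      by (rule inj_onI) (auto simp: doubleton_eq_iff)
    ultimately have "card {e \<in> T. u \<in> e} = n - 1"
      using assms(2) by (simp add: card_image)
    then show False using assms unfolding stars_def by auto
  qed
  with that show ?thesis by blast
qed

lemma connected_complement_nonstar:
  assumes "T \<in> spanning_trees n - stars n"
  shows "connected_on n (Kn_edges n - T)"
  unfolding connected_on_def
proof (intro ballI)
  fix u v assume u: "u \<in> {1..n}" and v: "v \<in> {1..n}"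
  let ?G = "Kn_edges n - T"
  have edge: "reach ?G a b" if "a \<in> {1..n}" "b \<in> {1..n}" "a \<noteq> b" "{a, b} \<notin> T" for a b
    using Kn_edgesI[OF that(1-3)] that(4) by (intro reach_edge) simp
  show "reach ?G u v"
  proof (cases "u \<noteq> v \<and> {u, v} \<in> T")
    case False
    then show ?thesis using edge u v reach.refl by blast
  next
    case uv: True
    obtain x where x: "x \<in> {1..n}" "x \<noteq> u" "{u, x} \<notin> T"
      using nonstar_has_non_neighbour[OF assms u] .
    obtain y where y: "y \<in> {1..n}" "y \<noteq> v" "{v, y} \<notin> T"
      using nonstar_has_non_neighbour[OF assms v] .
    have "x \<noteq> v" "y \<noteq> u" using x y uv by (auto simp: insert_commute)
    show ?thesis
    proof (cases "{x, v} \<in> T \<and> {u, y} \<in> T")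
      case True
      then have "x \<noteq> y" using y(3) by (auto simp: insert_commute)
      moreover have "{x, y} \<notin> T"
      proof
        assume "{x, y} \<in> T"
        then have "has_cycle T"
          using has_cycle_4[of u v x y T] uv True \<open>x \<noteq> y\<close> \<open>x \<noteq> v\<close> \<open>y \<noteq> u\<close> x(2) y(2)
          by (auto simp: insert_commute)
        then show False using assms unfolding spanning_trees_def by blast
      qed
      ultimately have "reach ?G u x" "reach ?G x y" "reach ?G y v"
        using edge x y u v \<open>y \<noteq> u\<close> by (auto simp: insert_commute)
      then show ?thesis using reach_trans by blast
    next
      case False
      then have "reach ?G u x \<and> reach ?G x v \<or> reach ?G u y \<and> reach ?G y v"
        using edge x y u v \<open>x \<noteq> v\<close> \<open>y \<noteq> u\<close> by (auto simp: insert_commute)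
      then show ?thesis using reach_trans by blast
    qed
  qed
qed

lemma card_pairs_of_edges_le:
  fixes E :: "'a :: linorder set set"
  assumes "finite E"
  shows "card {(v, r). {v, r} \<in> E} \<le> 2 * card E"
proof -
  let ?f = "\<lambda>(e, b). if b then (Min e, Max e) else (Max e, Min e)"
  have "{(v, r). {v, r} \<in> E} \<subseteq> ?f ` (E \<times> UNIV)"
  proof (safe)
    fix v r assume "{v, r} \<in> E"
    moreover have "?f ({v, r}, v \<le> r) = (v, r)" by (auto simp: min_def max_def)
    ultimately show "(v, r) \<in> ?f ` (E \<times> UNIV)" by (intro image_eqI[of _ _ "({v, r}, v \<le> r)"]) auto
  qed
  then have "card {(v, r). {v, r} \<in> E} \<le> card (?f ` (E \<times> UNIV))"
    using assms by (intro card_mono finite_imageI) auto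
  also have "\<dots> \<le> card (E \<times> (UNIV :: bool set))" using assms by (intro card_image_le) simp
  also have "\<dots> = 2 * card E" by (simp add: card_cartesian_product)
  finally show ?thesis .
qed

lemma binomial_le_power_corank:
  assumes "a \<le> n" "a \<le> m + k" "1 \<le> n"
  shows "a choose m \<le> n ^ k"
proof (cases "m \<le> a")
  case True
  then have "a choose m = a choose (a - m)" by (rule binomial_symmetric)
  also have "\<dots> \<le> a ^ (a - m)" by (rule binomial_le_pow) simp
  also have "\<dots> \<le> n ^ (a - m)" using assms(1) by (rule power_mono) simp
  also have "\<dots> \<le> n ^ k" using assms(2,3) by (intro power_increasing) auto
  finally show ?thesis .
qed (simp add: binomial_eq_0)

lemma finite_trees_avoiding: "finite (trees_avoiding n T0 F)"
proof -
  have "trees_avoiding n T0 F \<subseteq> Pow (Kn_edges n)"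
    unfolding trees_avoiding_def spanning_trees_def by auto
  then show ?thesis by (rule finite_subset) (simp add: finite_Kn_edges)
qed

section \<open>Attachment moves\<close>

locale forest_growth =
  fixes n :: nat and F T0 :: "nat set set"
  assumes forest: "is_forest n F" and T0_edges: "T0 \<subseteq> Kn_edges n"
begin

definition base_roots :: "nat set" where
  "base_roots = comp_reps n F"

definition attach_edges :: "(nat \<times> nat) set \<Rightarrow> nat set set" where
  "attach_edges Ds = (\<lambda>(v, r). {v, r}) ` Ds"

definition grown :: "(nat \<times> nat) set \<Rightarrow> nat set set" where
  "grown Ds = F \<union> attach_edges Ds"

definition roots :: "(nat \<times> nat) set \<Rightarrow> nat set" where
  "roots Ds = base_roots - snd ` Ds"

definition attachable :: "(nat \<times> nat) set \<Rightarrow> nat \<Rightarrow> nat \<Rightarrow> bool" where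
  "attachable Ds v r \<longleftrightarrow> r \<in> roots Ds \<and> v \<in> {1..n} \<and> \<not> reach (grown Ds) r v \<and> {v, r} \<notin> T0"

text \<open>A pair (v, r) records that the root r of a component of the current forest was joined
  to a vertex v of another component by an edge outside T0, after which r is no longer a root.\<close>
inductive attachment :: "(nat \<times> nat) set \<Rightarrow> bool" where
  empty: "attachment {}"
| insert: "attachment Ds \<Longrightarrow> attachable Ds v r \<Longrightarrow> attachment (insert (v, r) Ds)"

lemma F_edges: "F \<subseteq> Kn_edges n" and F_acyclic: "\<not> has_cycle F"
  using forest unfolding is_forest_def by auto

lemma base_roots_subset: "base_roots \<subseteq> {1..n}"
  unfolding base_roots_def by (rule comp_reps_subset)

lemma card_base_roots: "card base_roots + card F = n"
  unfolding base_roots_def by (rule card_comp_reps_acyclic[OF F_edges F_acyclic])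

lemma roots_empty: "roots {} = base_roots"
  unfolding roots_def by simp

lemma roots_insert: "roots (insert (v, r) Ds) = roots Ds - {r}"
  unfolding roots_def by auto

lemma roots_subset: "roots Ds \<subseteq> base_roots"
  unfolding roots_def by auto

lemma finite_roots: "finite (roots Ds)"
  unfolding roots_def base_roots_def by (simp add: finite_comp_reps)

lemma attach_edges_insert: "attach_edges (insert (v, r) Ds) = insert {v, r} (attach_edges Ds)"
  unfolding attach_edges_def by auto

lemma grown_empty: "grown {} = F"
  unfolding grown_def attach_edges_def by simp

lemma grown_insert: "grown (insert (v, r) Ds) = insert {v, r} (grown Ds)"
  unfolding grown_def attach_edges_def by auto

lemma attachable_vertices: "attachable Ds v r \<Longrightarrow> v \<in> {1..n} \<and> r \<in> {1..n}"
  unfolding attachable_def using roots_subset[of Ds] base_roots_subset by blast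

lemma attachable_new:
  assumes "attachable Ds v r"
  shows "(v, r) \<notin> Ds" "{v, r} \<notin> grown Ds" "v \<noteq> r"
proof -
  have "r \<notin> snd ` Ds" "\<not> reach (grown Ds) r v"
    using assms unfolding attachable_def roots_def by auto
  then show "(v, r) \<notin> Ds" "v \<noteq> r" using reach.refl by (force, blast)
  show "{v, r} \<notin> grown Ds"
  proof
    assume "{v, r} \<in> grown Ds"
    then have "reach (grown Ds) r v" by (intro reach_edge) (simp add: insert_commute)
    with \<open>\<not> reach (grown Ds) r v\<close> show False by contradiction
  qed
qed

lemma attachment_finite: "attachment Ds \<Longrightarrow> finite Ds"
  by (induction rule: attachment.induct) auto

lemma attachment_subset: "attachment Ds \<Longrightarrow> Ds \<subseteq> {1..n} \<times> {1..n}"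
  by (induction rule: attachment.induct) (auto dest: attachable_vertices)

lemma attach_edges_subset: "attachment Ds \<Longrightarrow> attach_edges Ds \<subseteq> Kn_edges n - (T0 \<union> F)"
proof (induction rule: attachment.induct)
  case (insert Ds v r)
  have "v \<in> {1..n}" "r \<in> {1..n}" using attachable_vertices[OF insert.hyps(2)] by auto
  moreover have "v \<noteq> r" "{v, r} \<notin> grown Ds" using attachable_new[OF insert.hyps(2)] by auto
  moreover have "{v, r} \<notin> T0" using insert.hyps(2) unfolding attachable_def by simp
  ultimately have "{v, r} \<in> Kn_edges n - (T0 \<union> F)" unfolding grown_def by (auto intro: Kn_edgesI)
  with insert.IH show ?case by (simp add: attach_edges_insert)
qed (simp add: attach_edges_def)

lemma card_attach_edges: "attachment Ds \<Longrightarrow> card (attach_edges Ds) = card Ds"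
proof (induction rule: attachment.induct)
  case (insert Ds v r)
  have "{v, r} \<notin> attach_edges Ds" "(v, r) \<notin> Ds"
    using attachable_new[OF insert.hyps(2)] unfolding grown_def by auto
  moreover have "finite Ds" "finite (attach_edges Ds)"
    using attachment_finite[OF insert.hyps(1)] unfolding attach_edges_def by auto
  ultimately show ?case using insert.IH by (simp add: attach_edges_insert)
qed (simp add: attach_edges_def)

lemma card_roots: "attachment Ds \<Longrightarrow> card (roots Ds) + card Ds = card base_roots"
proof (induction rule: attachment.induct)
  case (insert Ds v r)
  have "r \<in> roots Ds" using insert.hyps(2) unfolding attachable_def by simp
  then have "card (roots Ds - {r}) + 1 = card (roots Ds)"
    using finite_roots by (metis card_Suc_Diff1 Suc_eq_plus1)
  moreover have "card (insert (v, r) Ds) = card Ds + 1"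
    using attachable_new(1)[OF insert.hyps(2)] attachment_finite[OF insert.hyps(1)] by simp
  ultimately show ?case using insert.IH by (simp add: roots_insert)
qed (simp add: roots_empty)

lemma attachment_acyclic: "attachment Ds \<Longrightarrow> \<not> has_cycle (grown Ds)"
proof (induction rule: attachment.induct)
  case (insert Ds v r)
  have "\<not> reach (grown Ds) v r" using insert.hyps(2) reach_sym unfolding attachable_def by blast
  with insert.IH show ?case by (simp add: grown_insert not_has_cycle_insert)
qed (simp add: grown_empty F_acyclic)

lemma attachment_reaches_root:
  "attachment Ds \<Longrightarrow> x \<in> {1..n} \<Longrightarrow> \<exists>\<rho>\<in>roots Ds. reach (grown Ds) x \<rho>"
proof (induction arbitrary: x rule: attachment.induct)
  case empty
  then show ?case using comp_rep_in_comp_reps[OF F_edges] reach_comp_rep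
    by (auto simp: roots_empty grown_empty base_roots_def)
next
  case (insert Ds v r)
  obtain \<rho> where \<rho>: "\<rho> \<in> roots Ds" "reach (grown Ds) x \<rho>" using insert.IH insert.prems by blast
  show ?case
  proof (cases "\<rho> = r")
    case False
    have "grown Ds \<subseteq> grown (insert (v, r) Ds)" by (auto simp: grown_insert)
    with \<rho> False show ?thesis using reach_mono[OF \<rho>(2)] by (auto simp: roots_insert)
  next
    case True
    obtain \<rho>v where \<rho>v: "\<rho>v \<in> roots Ds" "reach (grown Ds) v \<rho>v"
      using insert.IH attachable_vertices[OF insert.hyps(2)] by blast
    have "\<rho>v \<noteq> r" using \<rho>v(2) insert.hyps(2) reach_sym unfolding attachable_def by blast
    moreover have "reach (grown (insert (v, r) Ds)) x \<rho>v"
      using \<rho>(2) \<rho>v(2) True unfolding grown_insert reach_insert_iff by blast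
    ultimately show ?thesis using \<rho>v(1) by (auto simp: roots_insert)
  qed
qed

lemma attachment_roots_separated:
  "attachment Ds \<Longrightarrow> \<rho>1 \<in> roots Ds \<Longrightarrow> \<rho>2 \<in> roots Ds \<Longrightarrow> reach (grown Ds) \<rho>1 \<rho>2 \<Longrightarrow> \<rho>1 = \<rho>2"
proof (induction arbitrary: \<rho>1 \<rho>2 rule: attachment.induct)
  case empty
  then show ?case using comp_reps_reach_eq by (simp add: roots_empty grown_empty base_roots_def)
next
  case (insert Ds v r)
  have r: "r \<in> roots Ds" using insert.hyps(2) unfolding attachable_def by simp
  have \<rho>: "\<rho>1 \<in> roots Ds" "\<rho>1 \<noteq> r" "\<rho>2 \<in> roots Ds" "\<rho>2 \<noteq> r"
    using insert.prems(1,2) by (auto simp: roots_insert)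
  have "reach (grown Ds) \<rho>1 \<rho>2 \<or> reach (grown Ds) r \<rho>2 \<or> reach (grown Ds) \<rho>1 r"
    using insert.prems(3) unfolding grown_insert reach_insert_iff by blast
  then show ?case using insert.IH \<rho> r by blast
qed

text \<open>A move (x, y) can be read off from its edge {x, y}: deleting the edge leaves x, but not y,
  joined to a root.\<close>
definition root_side :: "(nat \<times> nat) set \<Rightarrow> nat \<Rightarrow> nat \<Rightarrow> bool" where
  "root_side Ds x y \<longleftrightarrow> (\<exists>\<rho>\<in>roots Ds. reach (grown Ds - {{x, y}}) x \<rho>) \<and>
     (\<forall>\<rho>\<in>roots Ds. \<not> reach (grown Ds - {{x, y}}) y \<rho>)"

lemma root_side_new:
  assumes "attachment Ds" "attachable Ds v r"
  shows "root_side (insert (v, r) Ds) v r"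
proof -
  have "grown (insert (v, r) Ds) - {{v, r}} = grown Ds"
    using attachable_new(2)[OF assms(2)] by (auto simp: grown_insert)
  moreover obtain \<rho>v where "\<rho>v \<in> roots Ds" "reach (grown Ds) v \<rho>v"
    using attachment_reaches_root[OF assms(1)] attachable_vertices[OF assms(2)] by blast
  moreover have "\<rho>v \<noteq> r"
    using \<open>reach (grown Ds) v \<rho>v\<close> assms(2) reach_sym unfolding attachable_def by blast
  moreover have "\<not> reach (grown Ds) r \<rho>" if "\<rho> \<in> roots Ds - {r}" for \<rho>
    using attachment_roots_separated[OF assms(1)] assms(2) that unfolding attachable_def by blast
  ultimately show ?thesis unfolding root_side_def roots_insert by auto
qed

lemma root_side_insert_child:
  assumes "attachment Ds" "attachable Ds v r" "root_side Ds x y" "\<rho> \<in> roots Ds - {r}"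
  shows "\<not> reach (insert {v, r} (grown Ds - {{x, y}})) y \<rho>"
proof
  let ?G = "grown Ds - {{x, y}}"
  have r: "r \<in> roots Ds" using assms(2) unfolding attachable_def by simp
  have y: "\<forall>\<rho>\<in>roots Ds. \<not> reach ?G y \<rho>" using assms(3) unfolding root_side_def by blast
  assume "reach (insert {v, r} ?G) y \<rho>"
  then consider "reach ?G y \<rho>" | "reach ?G r \<rho>" | "reach ?G y r"
    unfolding reach_insert_iff by blast
  then show False
  proof cases
    case 2
    then have "reach (grown Ds) r \<rho>" by (rule reach_mono) blast
    then show False using attachment_roots_separated[OF assms(1) r] assms(4) by blast
  qed (use y assms(4) r in blast)+
qed

lemma root_side_insert_parent:
  assumes "attachment Ds" "attachable Ds v r" "root_side Ds x y"
  shows "\<exists>\<rho>\<in>roots Ds - {r}. reach (insert {v, r} (grown Ds - {{x, y}})) x \<rho>"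
proof -
  let ?G = "grown Ds - {{x, y}}"
  have r: "\<not> reach (grown Ds) r v" using assms(2) unfolding attachable_def by simp
  obtain \<rho> where \<rho>: "\<rho> \<in> roots Ds" "reach ?G x \<rho>"
    using assms(3) unfolding root_side_def by blast
  show ?thesis
  proof (cases "\<rho> = r")
    case False
    then show ?thesis using \<rho> reach_mono[OF \<rho>(2), of "insert {v, r} ?G"] by blast
  next
    case True
    obtain \<rho>v where \<rho>v: "\<rho>v \<in> roots Ds" "reach (grown Ds) v \<rho>v"
      using attachment_reaches_root[OF assms(1)] attachable_vertices[OF assms(2)] by blast
    have "\<rho>v \<noteq> r" using \<rho>v(2) r reach_sym by blast
    have "\<not> reach (grown Ds) v x"
    proof
      assume "reach (grown Ds) v x"
      moreover have "reach (grown Ds) x r" using reach_mono[OF \<rho>(2)] True by blast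
      ultimately have "reach (grown Ds) v r" by (rule reach_trans)
      then show False using r reach_sym by blast
    qed
    then have "reach ?G v \<rho>v" by (rule reach_Diff_edge[OF \<rho>v(2)])
    then have "reach (insert {v, r} ?G) x \<rho>v"
      using \<rho>(2) True unfolding reach_insert_iff by blast
    then show ?thesis using \<rho>v(1) \<open>\<rho>v \<noteq> r\<close> by blast
  qed
qed

lemma root_side_insert:
  assumes "attachment Ds" "attachable Ds v r" "(x, y) \<in> Ds" "root_side Ds x y"
  shows "root_side (insert (v, r) Ds) x y"
proof -
  have "{x, y} \<in> grown Ds"
    unfolding grown_def attach_edges_def using assms(3) by (auto intro: rev_image_eqI)
  then have "grown (insert (v, r) Ds) - {{x, y}} = insert {v, r} (grown Ds - {{x, y}})"
    using attachable_new(2)[OF assms(2)] unfolding grown_insert by auto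
  then show ?thesis
    using root_side_insert_child[OF assms(1,2,4)] root_side_insert_parent[OF assms(1,2,4)]
    unfolding root_side_def roots_insert by auto
qed

lemma attachment_root_side: "attachment Ds \<Longrightarrow> (x, y) \<in> Ds \<Longrightarrow> root_side Ds x y"
proof (induction rule: attachment.induct)
  case (insert Ds v r)
  show ?case
  proof (cases "(x, y) = (v, r)")
    case True
    then show ?thesis using root_side_new[OF insert.hyps] by simp
  next
    case False
    then have "(x, y) \<in> Ds" using insert.prems by auto
    then show ?thesis using root_side_insert[OF insert.hyps] insert.IH by blast
  qed
qed simp

lemma attachment_eqI:
  assumes "attachment D1" "attachment D2"
    and "attach_edges D1 = attach_edges D2" "roots D1 = roots D2"
  shows "D1 = D2"
proof -
  have "D1 \<subseteq> D2" if "attachment D1" "attachment D2"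
    "attach_edges D1 = attach_edges D2" "roots D1 = roots D2" for D1 D2
  proof
    fix p assume "p \<in> D1"
    then obtain x y where xy: "p = (x, y)" "(x, y) \<in> D1" by (cases p) auto
    have "{x, y} \<in> attach_edges D1"
      unfolding attach_edges_def by (rule image_eqI[of _ _ "(x, y)"]) (simp_all add: xy(2))
    then have "{x, y} \<in> attach_edges D2" using that(3) by simp
    then have "(x, y) \<in> D2 \<or> (y, x) \<in> D2"
      unfolding attach_edges_def by (auto simp: doubleton_eq_iff)
    moreover have "(y, x) \<notin> D2"
    proof
      assume "(y, x) \<in> D2"
      then have "root_side D2 y x" by (rule attachment_root_side[OF that(2)])
      moreover have "grown D2 - {{y, x}} = grown D1 - {{x, y}}"
        using that(3) unfolding grown_def by (simp add: insert_commute)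
      ultimately show False
        using attachment_root_side[OF that(1) xy(2)] that(4) unfolding root_side_def by auto
    qed
    ultimately show "p \<in> D2" using xy(1) by blast
  qed
  from this[OF assms] this[OF assms(2,1) assms(3,4)[symmetric]] show ?thesis by blast
qed

definition attachments :: "nat \<Rightarrow> (nat \<times> nat) set set" where
  "attachments k = {Ds. attachment Ds \<and> card Ds = k}"

definition moves :: "(nat \<times> nat) set \<Rightarrow> (nat \<times> nat) set" where
  "moves Ds = {(v, r). attachable Ds v r}"

lemma finite_attachments: "finite (attachments k)"
proof -
  have "attachments k \<subseteq> Pow ({1..n} \<times> {1..n})"
    unfolding attachments_def using attachment_subset by blast
  then show ?thesis by (rule finite_subset) simp
qed

lemma finite_moves: "finite (moves Ds)"
proof -
  have "moves Ds \<subseteq> {1..n} \<times> {1..n}" unfolding moves_def using attachable_vertices by blast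
  then show ?thesis by (rule finite_subset) simp
qed

lemma card_same_component_le:
  assumes "attachment Ds"
  shows "card {(v, r) \<in> {1..n} \<times> roots Ds. reach (grown Ds) r v} \<le> n"
proof -
  let ?S = "{(v, r) \<in> {1..n} \<times> roots Ds. reach (grown Ds) r v}"
  have "inj_on fst ?S"
  proof (rule inj_onI)
    fix p q assume "p \<in> ?S" "q \<in> ?S" "fst p = fst q"
    then obtain v r1 r2 where pq: "p = (v, r1)" "q = (v, r2)" "r1 \<in> roots Ds" "r2 \<in> roots Ds"
      and r: "reach (grown Ds) r1 v" "reach (grown Ds) r2 v" by auto
    then have "reach (grown Ds) r1 r2" using reach_trans[OF r(1) reach_sym[OF r(2)]] by simp
    then show "p = q" using attachment_roots_separated[OF assms pq(3,4)] pq(1,2) by simp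
  qed
  then have "card ?S = card (fst ` ?S)" by (rule card_image[symmetric])
  also have "\<dots> \<le> card {1..n}" by (rule card_mono) auto
  finally show ?thesis by simp
qed

lemma card_moves_ge:
  assumes "attachment Ds" "card T0 \<le> n - 1"
  shows "(card (roots Ds) - 3) * n \<le> card (moves Ds)"
proof -
  let ?P = "{1..n} \<times> roots Ds"
  let ?S = "{(v, r) \<in> ?P. reach (grown Ds) r v}"
  let ?Q = "{(v, r). {v, r} \<in> T0}"
  have "?Q \<subseteq> {1..n} \<times> {1..n}" using T0_edges by (auto simp: Kn_edges_def)
  then have "finite ?Q" by (rule finite_subset) simp
  moreover have "finite ?S" by (rule finite_subset[of _ ?P]) (auto simp: finite_roots)
  ultimately have "card ?P - card ?S - card ?Q \<le> card (?P - ?S - ?Q)"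
    using diff_card_le_card_Diff[of ?S ?P] diff_card_le_card_Diff[of ?Q "?P - ?S"] by linarith
  also have "\<dots> \<le> card (moves Ds)"
    by (rule card_mono[OF finite_moves]) (auto simp: moves_def attachable_def)
  finally have "card ?P - card ?S - card ?Q \<le> card (moves Ds)" .
  moreover have "card ?S \<le> n" by (rule card_same_component_le[OF assms(1)])
  moreover have "card ?Q \<le> 2 * n - 2"
    using card_pairs_of_edges_le[OF finite_subset_Kn_edges[OF T0_edges]] assms(2) by linarith
  moreover have "card ?P = card (roots Ds) * n" by (simp add: card_cartesian_product)
  ultimately show ?thesis by (simp add: diff_mult_distrib)
qed

lemma insert_move_attachments:
  assumes "Ds \<in> attachments k" "(v, r) \<in> moves Ds"
  shows "insert (v, r) Ds \<in> attachments (Suc k)" "(v, r) \<notin> Ds"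
proof -
  have vr: "attachable Ds v r" using assms(2) unfolding moves_def by simp
  show "(v, r) \<notin> Ds" by (rule attachable_new(1)[OF vr])
  moreover have "attachment Ds" "card Ds = k" "finite Ds"
    using assms(1) attachment_finite unfolding attachments_def by auto
  ultimately show "insert (v, r) Ds \<in> attachments (Suc k)"
    using attachment.insert[OF _ vr] unfolding attachments_def by simp
qed

lemma sum_card_moves_le: "(\<Sum>Ds\<in>attachments k. card (moves Ds)) \<le> Suc k * card (attachments (Suc k))"
proof -
  let ?split = "\<lambda>D'. (\<lambda>s. (D' - {s}, s)) ` D'"
  have fin: "finite D'" "card D' = Suc k" if "D' \<in> attachments (Suc k)" for D'
    using that attachment_finite unfolding attachments_def by auto
  have "(\<Sum>Ds\<in>attachments k. card (moves Ds)) = card (SIGMA Ds:attachments k. moves Ds)"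
    using finite_attachments finite_moves by simp
  also have "\<dots> \<le> card (\<Union>D'\<in>attachments (Suc k). ?split D')"
  proof (rule card_mono)
    show "finite (\<Union>D'\<in>attachments (Suc k). ?split D')"
      using finite_attachments fin(1) by blast
    show "(SIGMA Ds:attachments k. moves Ds) \<subseteq> (\<Union>D'\<in>attachments (Suc k). ?split D')"
    proof clarify
      fix Ds v r assume "Ds \<in> attachments k" "(v, r) \<in> moves Ds"
      from insert_move_attachments[OF this]
      have "insert (v, r) Ds \<in> attachments (Suc k)"
        and "(Ds, (v, r)) = (insert (v, r) Ds - {(v, r)}, (v, r))" by auto
      then show "(Ds, (v, r)) \<in> (\<Union>D'\<in>attachments (Suc k). ?split D')" by blast
    qed
  qed
  also have "\<dots> \<le> (\<Sum>D'\<in>attachments (Suc k). card (?split D'))"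
    by (rule card_UN_le[OF finite_attachments])
  also have "\<dots> \<le> (\<Sum>D'\<in>attachments (Suc k). Suc k)"
  proof (rule sum_mono)
    fix D' assume D': "D' \<in> attachments (Suc k)"
    show "card (?split D') \<le> Suc k" using card_image_le[OF fin(1)[OF D']] fin(2)[OF D'] by simp
  qed
  finally show ?thesis by (simp add: mult.commute)
qed

lemma sum_card_moves_ge:
  assumes "card T0 \<le> n - 1"
  shows "card (attachments k) * ((card base_roots - 3 - k) * n) \<le> (\<Sum>Ds\<in>attachments k. card (moves Ds))"
proof -
  have "(card base_roots - 3 - k) * n \<le> card (moves Ds)" if "Ds \<in> attachments k" for Ds
  proof -
    have Ds: "attachment Ds" "card Ds = k" using that unfolding attachments_def by auto
    then have "card base_roots - 3 - k = card (roots Ds) - 3" using card_roots[OF Ds(1)] by simp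
    then show ?thesis using card_moves_ge[OF Ds(1) assms] by simp
  qed
  then show ?thesis using sum_mono[of "attachments k" "\<lambda>_. (card base_roots - 3 - k) * n"] by simp
qed

lemma card_attachments_ge:
  assumes "card T0 \<le> n - 1"
  shows "n ^ k * ((card base_roots - 3) choose k) \<le> card (attachments k)"
proof (induction k)
  case 0
  have "attachments 0 = {{}}"
    unfolding attachments_def using attachment_finite attachment.empty by auto
  then show ?case by simp
next
  case (Suc k)
  define m where "m = card base_roots - 3"
  have bb: "Suc k * (m choose Suc k) = (m - k) * (m choose k)"
    using binomial_absorption[of k m] binomial_absorb_comp[of m k] by simp
  have "Suc k * (n ^ Suc k * (m choose Suc k)) = n ^ Suc k * (Suc k * (m choose Suc k))"
    by (rule mult.left_commute)
  also have "\<dots> = n ^ k * (m choose k) * ((m - k) * n)" by (simp only: bb) (simp add: mult_ac)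
  also have "\<dots> \<le> card (attachments k) * ((m - k) * n)"
    using Suc.IH unfolding m_def by (rule mult_right_mono) simp
  also have "\<dots> \<le> Suc k * card (attachments (Suc k))"
    using sum_card_moves_ge[OF assms, of k] sum_card_moves_le unfolding m_def by (rule le_trans)
  finally show ?case unfolding m_def by (rule Suc_mult_le_cancel1[THEN iffD1])
qed

lemma attachment_extends_to_avoiding_tree:
  assumes "T0 \<in> spanning_trees n - stars n" "attachment Ds"
  obtains T where "T \<in> trees_avoiding n T0 F" "grown Ds \<subseteq> T"
proof -
  let ?G = "F \<union> (Kn_edges n - T0)"
  have "grown Ds \<subseteq> ?G" using attach_edges_subset[OF assms(2)] unfolding grown_def by blast
  moreover have "?G \<subseteq> Kn_edges n" using F_edges by blast
  moreover have "connected_on n ?G"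
    using connected_complement_nonstar[OF assms(1)] by (rule connected_on_mono) blast
  ultimately obtain T where "T \<in> spanning_trees n" "grown Ds \<subseteq> T" "T \<subseteq> ?G"
    using acyclic_extends_to_spanning_tree[OF _ _ attachment_acyclic[OF assms(2)]] by blast
  moreover have "F \<subseteq> grown Ds" unfolding grown_def by blast
  ultimately have "T \<in> trees_avoiding n T0 F" unfolding trees_avoiding_def by blast
  then show ?thesis using \<open>grown Ds \<subseteq> T\<close> by (rule that)
qed

lemma card_tree_Diff_forest:
  assumes "T \<in> spanning_trees n" "F \<subseteq> T" "1 \<le> n"
  shows "card (T - F) < card base_roots"
proof -
  have T: "T \<subseteq> Kn_edges n" "\<not> has_cycle T" using assms(1) unfolding spanning_trees_def by auto
  have "card (T - F) = card T - card F" "card F \<le> card T"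
    using assms(2) finite_subset_Kn_edges[OF T(1)] by (simp_all add: card_Diff_subset card_mono finite_subset)
  then show ?thesis using card_acyclic_le[OF T] card_base_roots assms(3) by linarith
qed

lemma card_attachments_in_tree:
  assumes "T \<in> spanning_trees n" "F \<subseteq> T" "3 \<le> card base_roots"
  defines "m \<equiv> card base_roots - 3"
  shows "card {Ds \<in> attachments m. grown Ds \<subseteq> T} \<le> n ^ 5"
proof -
  let ?A = "{Ds \<in> attachments m. grown Ds \<subseteq> T}"
  let ?SS = "{S. S \<subseteq> T - F \<and> card S = m}" and ?RR = "{R. R \<subseteq> {1..n} \<and> card R = 3}"
  let ?g = "\<lambda>Ds. (attach_edges Ds, roots Ds)"
  have T: "T \<subseteq> Kn_edges n" "\<not> has_cycle T" using assms(1) unfolding spanning_trees_def by auto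
  have n: "3 \<le> n" using assms(3) card_mono[OF _ base_roots_subset] by fastforce
  have inj: "inj_on ?g ?A"
  proof (rule inj_onI)
    fix D1 D2 assume "D1 \<in> ?A" "D2 \<in> ?A" "?g D1 = ?g D2"
    then show "D1 = D2" by (intro attachment_eqI) (auto simp: attachments_def)
  qed
  have sub: "?g ` ?A \<subseteq> ?SS \<times> ?RR"
  proof (rule image_subsetI)
    fix Ds assume "Ds \<in> ?A"
    then have "attachment Ds" "card Ds = m" "attach_edges Ds \<subseteq> grown Ds" "grown Ds \<subseteq> T"
      unfolding attachments_def grown_def by auto
    then have "attach_edges Ds \<subseteq> T - F" "card (attach_edges Ds) = m"
      using attach_edges_subset card_attach_edges unfolding m_def by auto
    moreover have "card (roots Ds) = 3"
      using card_roots[OF \<open>attachment Ds\<close>] \<open>card Ds = m\<close> assms(3) unfolding m_def by simp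
    moreover have "roots Ds \<subseteq> {1..n}" using roots_subset base_roots_subset by blast
    ultimately show "?g Ds \<in> ?SS \<times> ?RR" by simp
  qed
  have "finite (?SS \<times> ?RR)"
    using finite_subset_Kn_edges[OF T(1)] by auto
  then have "card ?A \<le> card ?SS * card ?RR"
    using card_mono[OF _ sub] card_image[OF inj] by (simp add: card_cartesian_product)
  moreover have "card ?SS \<le> n ^ 2"
    using card_tree_Diff_forest[OF assms(1,2)] n card_mono[OF _ base_roots_subset]
      finite_subset_Kn_edges[OF T(1)]
    unfolding m_def by (simp add: n_subsets binomial_le_power_corank)
  moreover have "card ?RR \<le> n ^ 3" using n by (simp add: n_subsets binomial_le_pow)
  ultimately have "card ?A \<le> n ^ 2 * n ^ 3" by (meson le_trans mult_le_mono)
  then show ?thesis by (simp flip: power_add)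
qed

lemma card_attachments_le_trees:
  assumes "T0 \<in> spanning_trees n - stars n" "3 \<le> card base_roots"
  shows "card (attachments (card base_roots - 3)) \<le> card (trees_avoiding n T0 F) * n ^ 5"
proof -
  let ?m = "card base_roots - 3" and ?TA = "trees_avoiding n T0 F"
  let ?fibre = "\<lambda>T. {Ds \<in> attachments ?m. grown Ds \<subseteq> T}"
  have "attachments ?m = (\<Union>T\<in>?TA. ?fibre T)"
    using attachment_extends_to_avoiding_tree[OF assms(1)] unfolding attachments_def by blast
  also have "card \<dots> \<le> (\<Sum>T\<in>?TA. card (?fibre T))"
    by (rule card_UN_le[OF finite_trees_avoiding])
  also have "\<dots> \<le> (\<Sum>T\<in>?TA. n ^ 5)"
    by (rule sum_mono, rule card_attachments_in_tree[OF _ _ assms(2)])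
      (auto simp: trees_avoiding_def)
  finally show ?thesis by simp
qed

end

theorem card_trees_avoiding_ge:
  assumes "is_forest n F" "T0 \<in> spanning_trees n - stars n" "card F + 8 \<le> n"
  shows "n ^ (n - card F - 8) \<le> card (trees_avoiding n T0 F)"
proof -
  interpret forest_growth n F T0
    using assms(1,2) unfolding spanning_trees_def by unfold_locales auto
  have roots: "card base_roots = n - card F" using card_base_roots by simp
  have T0: "card T0 \<le> n - 1"
    using assms(2) card_acyclic_le unfolding spanning_trees_def by blast
  have "n - card F - 8 + 5 = card base_roots - 3" using roots assms(3) by simp
  then have "n ^ (n - card F - 8) * n ^ 5 = n ^ (card base_roots - 3)" by (metis power_add)
  also have "\<dots> \<le> card (attachments (card base_roots - 3))"
    using card_attachments_ge[OF T0, of "card base_roots - 3"] by simp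
  also have "\<dots> \<le> card (trees_avoiding n T0 F) * n ^ 5"
    using card_attachments_le_trees[OF assms(2)] roots assms(3) by simp
  finally show ?thesis using assms(3) by simp
qed

section \<open>A non-star tree and a disjoint forest\<close>

definition path_edges :: "nat \<Rightarrow> nat set set" where
  "path_edges n = (\<lambda>i. {i, Suc i}) ` {1..<n}"

text \<open>The fan avoids vertex 2, so it shares no edge with the path 1, 2, ..., n.\<close>
definition fan_edges :: "nat \<Rightarrow> nat set set" where
  "fan_edges t = (\<lambda>i. {1, i}) ` {3..<t + 3}"

lemma path_edges_acyclic: "\<not> has_cycle (path_edges k)"
proof (induction k)
  case 0
  then show ?case unfolding path_edges_def has_cycle_def by simp
next
  case (Suc k)
  show ?case
  proof (cases "k = 0")
    case False
    then have "path_edges (Suc k) = insert {k, Suc k} (path_edges k)"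
      unfolding path_edges_def by (auto simp: atLeastLessThanSuc)
    moreover have "\<forall>e\<in>path_edges k. Suc k \<notin> e" unfolding path_edges_def by auto
    then have "\<not> reach (path_edges k) k (Suc k)" using reach_isolated by fastforce
    ultimately show ?thesis using not_has_cycle_insert[OF Suc.IH] by simp
  qed (simp add: path_edges_def has_cycle_def)
qed

lemma reach_path_edges: "i \<in> {1..n} \<Longrightarrow> reach (path_edges n) 1 i"
proof (induction i)
  case (Suc i)
  show ?case
  proof (cases "i = 0")
    case False
    then have "{i, Suc i} \<in> path_edges n" using Suc.prems unfolding path_edges_def by auto
    with Suc False show ?thesis by (auto intro: reach.step)
  qed (simp add: reach.refl)
qed simp

lemma path_edges_spanning_tree: "path_edges n \<in> spanning_trees n"
proof -
  have "path_edges n \<subseteq> Kn_edges n" unfolding path_edges_def by (auto intro!: Kn_edgesI)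
  moreover have "connected_on n (path_edges n)" unfolding connected_on_def
    using reach_trans[OF reach_sym[OF reach_path_edges] reach_path_edges] by blast
  ultimately show ?thesis using path_edges_acyclic unfolding spanning_trees_def by simp
qed

lemma path_edges_not_star:
  assumes "4 \<le> n"
  shows "path_edges n \<notin> stars n"
proof
  assume "path_edges n \<in> stars n"
  then obtain v where v: "card {e \<in> path_edges n. v \<in> e} = n - 1" unfolding stars_def by blast
  have "{e \<in> path_edges n. v \<in> e} \<subseteq> {{v - 1, v}, {v, Suc v}}"
    unfolding path_edges_def by (auto simp: insert_commute)
  then have "card {e \<in> path_edges n. v \<in> e} \<le> card {{v - 1, v}, {v, Suc v}}"
    by (intro card_mono) auto
  also have "\<dots> \<le> 2" by (rule card_insert_le_m1) auto
  finally show False using v assms by linarith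
qed

lemma fan_edges_forest: "t + 2 \<le> n \<Longrightarrow> is_forest n (fan_edges t)"
proof -
  have "\<not> has_cycle (fan_edges t)"
  proof (induction t)
    case 0
    then show ?case unfolding fan_edges_def has_cycle_def by simp
  next
    case (Suc t)
    have "fan_edges (Suc t) = insert {1, t + 3} (fan_edges t)"
      unfolding fan_edges_def by auto
    moreover have "\<forall>e\<in>fan_edges t. t + 3 \<notin> e" unfolding fan_edges_def by auto
    then have "\<not> reach (fan_edges t) 1 (t + 3)" using reach_isolated by fastforce
    ultimately show ?case using not_has_cycle_insert[OF Suc.IH] by simp
  qed
  moreover assume "t + 2 \<le> n"
  then have "fan_edges t \<subseteq> Kn_edges n" unfolding fan_edges_def by (auto intro!: Kn_edgesI)
  ultimately show ?thesis unfolding is_forest_def by simp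
qed

lemma card_fan_edges: "card (fan_edges t) = t"
proof -
  have "inj_on (\<lambda>i. {1, i}) {3..<t + 3}" by (rule inj_onI) (auto simp: doubleton_eq_iff)
  then show ?thesis unfolding fan_edges_def by (simp add: card_image)
qed

lemma path_edges_Int_fan_edges: "path_edges n \<inter> fan_edges t = {}"
proof -
  have "{i, Suc i} \<noteq> {1, j}" if "1 \<le> i" "3 \<le> j" for i j :: nat
    using that by (auto simp: doubleton_eq_iff)
  then show ?thesis unfolding path_edges_def fan_edges_def by fastforce
qed

lemma admissible_pair_exists:
  assumes "1 \<le> t" "t + 3 \<le> n"
  shows "\<exists>F T0. is_forest n F \<and> card F = t \<and> T0 \<in> spanning_trees n - stars n \<and> card (T0 \<inter> F) < t"
  using assms fan_edges_forest[of t n] card_fan_edges path_edges_spanning_tree path_edges_not_star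
    path_edges_Int_fan_edges
  by (intro exI[of _ "fan_edges t"] exI[of _ "path_edges n"]) simp

lemma D_lower_bound:
  assumes "\<exists>F T0. is_forest n F \<and> card F = t \<and> T0 \<in> spanning_trees n - stars n \<and> card (T0 \<inter> F) < t"
    and "\<And>F T0. is_forest n F \<Longrightarrow> card F = t \<Longrightarrow> T0 \<in> spanning_trees n - stars n \<Longrightarrow>
      b \<le> card (trees_avoiding n T0 F)"
  shows "b \<le> D n t"
proof -
  define S where "S = {card (trees_avoiding n T0 F) | F T0.
      is_forest n F \<and> card F = t \<and> T0 \<in> spanning_trees n - stars n \<and> card (T0 \<inter> F) < t}"
  have "card (trees_avoiding n T0 F) \<le> card (Pow (Kn_edges n))" for T0 F
    using finite_Kn_edges by (intro card_mono) (auto simp: trees_avoiding_def spanning_trees_def)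
  then have "S \<subseteq> {..card (Pow (Kn_edges n))}" unfolding S_def by blast
  then have "finite S" by (rule finite_subset) simp
  moreover have "S \<noteq> {}" using assms(1) unfolding S_def by blast
  moreover have "\<forall>x\<in>S. b \<le> x" using assms(2) unfolding S_def by blast
  ultimately show ?thesis unfolding D_def S_def[symmetric] by (simp add: Min_ge_iff)
qed

theorem proposition3p1:
  fixes t n :: nat
  assumes "t \<ge> 1" and "n \<ge> 2 * t + 110"
  shows "D n t > n ^ (n - 2 * t - 17)"
proof -
  have "n ^ (n - t - 8) \<le> D n t"
  proof (rule D_lower_bound)
    show "\<exists>F T0. is_forest n F \<and> card F = t \<and> T0 \<in> spanning_trees n - stars n \<and> card (T0 \<inter> F) < t"
      using assms by (intro admissible_pair_exists) simp_all
    show "n ^ (n - t - 8) \<le> card (trees_avoiding n T0 F)"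
      if "is_forest n F" "card F = t" "T0 \<in> spanning_trees n - stars n" for F T0
      using card_trees_avoiding_ge[OF that(1,3)] that(2) assms(2) by simp
  qed
  moreover have "n ^ (n - 2 * t - 17) < n ^ (n - t - 8)"
    using assms by (intro power_strict_increasing) auto
  ultimately show ?thesis by linarith
qed

end
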